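(* Let $R$ be a commutative ring such that there exists a derivation $\partial\in\mathrm{Der}(R)$ with $r\partial\neq0$ for all nonzero $r\in R$. Then the group homomorphism $\mathrm{Aut}(R)\to\mathrm{Aut}_{\mathrm{Lie}}(\mathrm{Der}(R))$, $\sigma\mapsto(\delta\mapsto\sigma\delta\sigma^{-1})$, is a monomorphism.
   Context: $\mathrm{Aut}(R)$ is the group of ring automorphisms of $R$, $\mathrm{Der}(R)$ is the Lie algebra of derivations of $R$ with bracket $[\delta,\delta']=\delta\delta'-\delta'\delta$, and $r\partial$ denotes the derivation $a\mapsto r\partial(a)$. *)

theory Defs
  imports Main
begin

definition is_derivation :: "('a::comm_ring_1 \<Rightarrow> 'a) \<Rightarrow> bool" where
  "is_derivation d \<longleftrightarrow> (\<forall>a b. d (a + b) = d a + d b) \<and> (\<forall>a b. d (a * b) = a * d b + b * d a)"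

definition Der :: "('a::comm_ring_1 \<Rightarrow> 'a) set" where
  "Der = {d. is_derivation d}"

definition der_bracket :: "('a::comm_ring_1 \<Rightarrow> 'a) \<Rightarrow> ('a \<Rightarrow> 'a) \<Rightarrow> ('a \<Rightarrow> 'a)" where
  "der_bracket d d' = (\<lambda>a. d (d' a) - d' (d a))"

definition Aut :: "('a::comm_ring_1 \<Rightarrow> 'a) set" where
  "Aut = {\<sigma>. bij \<sigma> \<and> (\<forall>a b. \<sigma> (a + b) = \<sigma> a + \<sigma> b) \<and> (\<forall>a b. \<sigma> (a * b) = \<sigma> a * \<sigma> b) \<and> \<sigma> 1 = 1}"

text \<open>Lie algebra automorphisms of Der(R) (Der(R) is a Lie ring, i.e. Lie algebra over the integers):
  bijections of Der(R) onto itself that are additive and preserve the bracket.\<close>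
definition Aut_Lie_Der :: "(('a::comm_ring_1 \<Rightarrow> 'a) \<Rightarrow> ('a \<Rightarrow> 'a)) set" where
  "Aut_Lie_Der = {\<Phi>. bij_betw \<Phi> Der Der \<and>
     (\<forall>d\<in>Der. \<forall>d'\<in>Der. \<Phi> (\<lambda>a. d a + d' a) = (\<lambda>a. \<Phi> d a + \<Phi> d' a)
                       \<and> \<Phi> (der_bracket d d') = der_bracket (\<Phi> d) (\<Phi> d'))}"

definition conj_der :: "('a \<Rightarrow> 'a) \<Rightarrow> ('a \<Rightarrow> 'a) \<Rightarrow> ('a \<Rightarrow> 'a)" where
  "conj_der \<sigma> \<delta> = \<sigma> \<circ> \<delta> \<circ> inv \<sigma>"

end

theory Submission
  imports Defs
begin

text \<open>Conjugation by \<sigma> is visibly a bracket-preserving bijection of Der(R), with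
  inverse conjugation by \<sigma>\<inverse>. For injectivity, if \<sigma> and \<tau> induce the same conjugation then
  \<rho> = \<tau>\<inverse>\<sigma> is an automorphism commuting with every derivation, in particular with every
  r\<partial>. Applying \<rho>(r\<partial>a) = r\<partial>(\<rho>a) and \<rho>(r\<partial>a) = \<rho>(r)\<partial>(\<rho>a) to all a gives
  (\<rho>(r) - r)\<partial> = 0 since \<rho> is onto, hence \<rho>(r) = r by the hypothesis on \<partial>.\<close>

lemma AutD:
  assumes "\<sigma> \<in> Aut"
  shows Aut_bij: "bij \<sigma>"
    and Aut_add: "\<sigma> (a + b) = \<sigma> a + \<sigma> b"
    and Aut_mult: "\<sigma> (a * b) = \<sigma> a * \<sigma> b"
    and Aut_one: "\<sigma> 1 = 1"
  using assms by (auto simp: Aut_def)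

lemma Aut_f_inv_f: "\<sigma> \<in> Aut \<Longrightarrow> \<sigma> (inv \<sigma> x) = x"
  by (simp add: Aut_bij bij_is_surj surj_f_inv_f)

lemma Aut_inv_f_f: "\<sigma> \<in> Aut \<Longrightarrow> inv \<sigma> (\<sigma> x) = x"
  by (simp add: Aut_bij bij_is_inj inv_f_f)

lemma Aut_diff: "\<sigma> \<in> Aut \<Longrightarrow> \<sigma> (a - b) = \<sigma> a - \<sigma> b"
  by (metis Aut_add eq_diff_eq)

lemma Aut_inv:
  assumes "\<sigma> \<in> Aut" shows "inv \<sigma> \<in> Aut"
proof -
  have "inv \<sigma> (a + b) = inv \<sigma> a + inv \<sigma> b" for a b
    using Aut_add[OF assms, of "inv \<sigma> a" "inv \<sigma> b"]
    by (metis assms Aut_f_inv_f Aut_inv_f_f)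
  moreover have "inv \<sigma> (a * b) = inv \<sigma> a * inv \<sigma> b" for a b
    using Aut_mult[OF assms, of "inv \<sigma> a" "inv \<sigma> b"]
    by (metis assms Aut_f_inv_f Aut_inv_f_f)
  moreover have "inv \<sigma> 1 = 1"
    using Aut_inv_f_f[OF assms, of 1] by (simp add: Aut_one[OF assms])
  ultimately show ?thesis
    using assms by (auto simp: Aut_def bij_imp_bij_inv)
qed

lemma Aut_comp: "\<sigma> \<in> Aut \<Longrightarrow> \<tau> \<in> Aut \<Longrightarrow> \<sigma> \<circ> \<tau> \<in> Aut"
  by (auto simp: Aut_def bij_comp)

lemma DerD:
  assumes "d \<in> Der"
  shows Der_add: "d (a + b) = d a + d b"
    and Der_mult: "d (a * b) = a * d b + b * d a"
  using assms by (auto simp: Der_def is_derivation_def)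

lemma scaled_derivation_in_Der:
  assumes "d \<in> Der" shows "(\<lambda>a. r * d a) \<in> Der"
  unfolding Der_def is_derivation_def
  by (simp add: Der_add[OF assms] Der_mult[OF assms] algebra_simps)

lemma conj_der_in_Der:
  assumes "\<sigma> \<in> Aut" "d \<in> Der" shows "conj_der \<sigma> d \<in> Der"
proof -
  have "inv \<sigma> \<in> Aut" using assms(1) by (rule Aut_inv)
  then show ?thesis
    unfolding Der_def is_derivation_def conj_der_def
    by (simp add: Aut_add[OF assms(1)] Aut_mult[OF assms(1)] Aut_f_inv_f[OF assms(1)]
        Aut_add[OF \<open>inv \<sigma> \<in> Aut\<close>] Aut_mult[OF \<open>inv \<sigma> \<in> Aut\<close>]
        Der_add[OF assms(2)] Der_mult[OF assms(2)])
qed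

lemma conj_der_add:
  "\<sigma> \<in> Aut \<Longrightarrow> conj_der \<sigma> (\<lambda>a. d a + d' a) = (\<lambda>a. conj_der \<sigma> d a + conj_der \<sigma> d' a)"
  by (simp add: conj_der_def Aut_add fun_eq_iff)

lemma conj_der_bracket:
  "\<sigma> \<in> Aut \<Longrightarrow>
    conj_der \<sigma> (der_bracket d d') = der_bracket (conj_der \<sigma> d) (conj_der \<sigma> d')"
  by (simp add: conj_der_def der_bracket_def Aut_diff Aut_inv_f_f fun_eq_iff)

lemma conj_der_comp:
  assumes "\<sigma> \<in> Aut" "\<tau> \<in> Aut"
  shows "conj_der (\<sigma> \<circ> \<tau>) d = conj_der \<sigma> (conj_der \<tau> d)"
proof -
  have "inv (\<sigma> \<circ> \<tau>) = inv \<tau> \<circ> inv \<sigma>"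
    using assms by (simp add: Aut_bij o_inv_distrib)
  then show ?thesis
    by (simp add: conj_der_def o_assoc)
qed

lemma conj_der_inv_cancel: "\<sigma> \<in> Aut \<Longrightarrow> conj_der (inv \<sigma>) (conj_der \<sigma> d) = d"
  by (simp add: conj_der_def fun_eq_iff Aut_inv_f_f Aut_bij inv_inv_eq)

lemma conj_der_cancel_inv: "\<sigma> \<in> Aut \<Longrightarrow> conj_der \<sigma> (conj_der (inv \<sigma>) d) = d"
  by (metis conj_der_inv_cancel Aut_inv Aut_bij inv_inv_eq)

lemma conj_der_in_Aut_Lie_Der:
  assumes "\<sigma> \<in> Aut" shows "conj_der \<sigma> \<in> Aut_Lie_Der"
proof -
  have "bij_betw (conj_der \<sigma>) Der Der"
    by (rule bij_betw_byWitness[where f' = "conj_der (inv \<sigma>)"])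
      (use assms Aut_inv conj_der_in_Der conj_der_inv_cancel conj_der_cancel_inv in auto)
  then show ?thesis
    using assms by (simp add: Aut_Lie_Der_def conj_der_add conj_der_bracket)
qed

lemma conj_der_fixed_imp_commute:
  assumes "\<rho> \<in> Aut" "conj_der \<rho> d = d" shows "\<rho> (d a) = d (\<rho> a)"
  by (metis assms conj_der_def comp_apply Aut_inv_f_f)

lemma Aut_commuting_with_Der_eq_id:
  fixes D \<rho> :: "'a::comm_ring_1 \<Rightarrow> 'a"
  assumes "D \<in> Der" and faithful: "\<forall>r. r \<noteq> 0 \<longrightarrow> (\<lambda>a. r * D a) \<noteq> (\<lambda>a. 0)"
    and "\<rho> \<in> Aut" and commute: "\<And>d a. d \<in> Der \<Longrightarrow> \<rho> (d a) = d (\<rho> a)"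
  shows "\<rho> = id"
proof
  fix r
  have "(\<rho> r - r) * D b = 0" for b
  proof -
    obtain a where a: "\<rho> a = b"
      using \<open>\<rho> \<in> Aut\<close> Aut_f_inv_f by metis
    have "\<rho> r * D b = \<rho> (r * D a)"
      using a \<open>\<rho> \<in> Aut\<close> commute[OF \<open>D \<in> Der\<close>] by (simp add: Aut_mult)
    also have "\<dots> = r * D b"
      using a commute[OF scaled_derivation_in_Der[OF \<open>D \<in> Der\<close>]] by simp
    finally show ?thesis
      by (simp add: algebra_simps)
  qed
  then have "(\<lambda>b. (\<rho> r - r) * D b) = (\<lambda>b. 0)" ..
  then have "\<rho> r - r = 0"
    using faithful by blast
  then show "\<rho> r = id r"
    by simp
qed

lemma conj_der_inj:
  fixes D \<sigma> \<tau> :: "'a::comm_ring_1 \<Rightarrow> 'a"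
  assumes "D \<in> Der" and "\<forall>r. r \<noteq> 0 \<longrightarrow> (\<lambda>a. r * D a) \<noteq> (\<lambda>a. 0)"
    and "\<sigma> \<in> Aut" "\<tau> \<in> Aut" and eq: "\<forall>\<delta>\<in>Der. conj_der \<sigma> \<delta> = conj_der \<tau> \<delta>"
  shows "\<sigma> = \<tau>"
proof -
  have \<rho>: "inv \<tau> \<circ> \<sigma> \<in> Aut"
    using assms by (simp add: Aut_comp Aut_inv)
  have "conj_der (inv \<tau> \<circ> \<sigma>) d = d" if "d \<in> Der" for d
    using assms that by (simp add: conj_der_comp Aut_inv conj_der_inv_cancel)
  then have "inv \<tau> \<circ> \<sigma> = id"
    using Aut_commuting_with_Der_eq_id[OF assms(1,2) \<rho>] conj_der_fixed_imp_commute[OF \<rho>]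
    by blast
  then show ?thesis
    by (metis \<open>\<tau> \<in> Aut\<close> Aut_f_inv_f comp_apply id_apply ext)
qed

theorem lemma2p2:
  fixes D :: "'a::comm_ring_1 \<Rightarrow> 'a"
  assumes "D \<in> Der"
    and "\<forall>r. r \<noteq> 0 \<longrightarrow> (\<lambda>a. r * D a) \<noteq> (\<lambda>a. 0)"
  shows "(\<forall>\<sigma>\<in>(Aut :: ('a \<Rightarrow> 'a) set). conj_der \<sigma> \<in> Aut_Lie_Der)
    \<and> (\<forall>\<sigma>\<in>(Aut :: ('a \<Rightarrow> 'a) set). \<forall>\<tau>\<in>Aut. \<forall>\<delta>\<in>Der.
          conj_der (\<sigma> \<circ> \<tau>) \<delta> = conj_der \<sigma> (conj_der \<tau> \<delta>))
    \<and> (\<forall>\<sigma>\<in>(Aut :: ('a \<Rightarrow> 'a) set). \<forall>\<tau>\<in>Aut.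
          (\<forall>\<delta>\<in>Der. conj_der \<sigma> \<delta> = conj_der \<tau> \<delta>) \<longrightarrow> \<sigma> = \<tau>)"
  using conj_der_in_Aut_Lie_Der conj_der_comp conj_der_inj[OF assms] by blast

end
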